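(* Let $r(n)$ be the Golay–Rudin–Shapiro sequence defined by $r(0)=1$, $r(2n)=r(n)$, $r(2n+1)=(-1)^n r(n)$. Then in the ring of formal power series $\mathbb{Z}[[z]]$, $$\sum_{k\ge 0}(-1)^k z^{2^k-1}=\cfrac{1}{1+\cfrac{r(0)r(2)z}{1+\cfrac{r(1)r(3)z}{1+\cfrac{r(2)r(4)z}{1+\cdots}}}}.$$
   Context: The infinite continued fraction $\frac{1}{1+\frac{c_0z}{1+\frac{c_1z}{1+\cdots}}}$ with $c_n=r(n)r(n+2)\in\{\pm1\}$ is understood as the formal power series limit of its finite truncations (the $N$-th truncation agrees with the limit up to order $z^N$). Explicitly the right-hand side is $\frac{1}{1+\frac{z}{1-\frac{z}{1+\frac{z}{1-\cdots}}}}$ at the start. *)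

theory Defs
  imports "HOL-Computational_Algebra.Formal_Power_Series"
begin

fun grs :: "nat \<Rightarrow> int" where
  "grs n = (if n = 0 then 1
            else if even n then grs (n div 2)
            else (-1) ^ (n div 2) * grs (n div 2))"

definition grs_c :: "nat \<Rightarrow> int" where
  "grs_c n = grs n * grs (n + 2)"

text \<open>Left-hand side: the integer power series sum over k of (-1)^k z^(2^k - 1).
  Since 2^k - 1 \<ge> k, only k \<le> n can contribute to the coefficient of z^n.\<close>
definition lhs_series :: "int fps" where
  "lhs_series = Abs_fps (\<lambda>n. \<Sum>k\<le>n. if 2 ^ k - 1 = n then (-1) ^ k else 0)"

fun cf_den :: "(nat \<Rightarrow> int) \<Rightarrow> nat \<Rightarrow> nat \<Rightarrow> rat fps" where
  "cf_den c m 0 = 1"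
| "cf_den c m (Suc N) = 1 + fps_const (of_int (c m)) * fps_X * inverse (cf_den c (Suc m) N)"

text \<open>N-th truncation  1/(1 + c0 z/(1 + c1 z/( ... /(1 + c_(N-1) z)))).\<close>
definition cf_trunc :: "(nat \<Rightarrow> int) \<Rightarrow> nat \<Rightarrow> rat fps" where
  "cf_trunc c N = inverse (cf_den c 0 N)"

definition fps_int_to_rat :: "int fps \<Rightarrow> rat fps" where
  "fps_int_to_rat f = Abs_fps (\<lambda>n. of_int (fps_nth f n))"

end

theory Submission
  imports Defs
begin

text \<open>
  The series F(z) = \<Sum>k (-1)^k z^(2^k - 1) is characterised by F = 1 - z F(z^2). Write the
  truncations as quotients p/q of pairs obtained by applying 2x2 matrices to (1,1). The recursion
  for r makes the coefficients of the m-th block of four consecutive steps equal to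
  s, -s, s e, -s e with s = (-1)^m and e = r(m) r(m+1) = c(2m) = -c(2m+1); an explicit linear map
  turns such a block with variable z into the two steps c(2m), c(2m+1) with variable z^2.
  Hence T_(4K+4)(z) = 1 - z T_(2K+1)(z^2), the functional equation of F, and since
  T_N = T_M mod z^N for N \<le> M, induction on N shows T_N = F mod z^N.
\<close>

unbundle fps_syntax
declare grs.simps [simp del]

lemma fps_X_power_dvd_iff: "fps_X ^ n dvd (f :: 'a::comm_ring_1 fps) \<longleftrightarrow> (\<forall>i<n. f $ i = 0)"
proof
  assume "fps_X ^ n dvd f"
  then obtain h where "f = fps_X ^ n * h" ..
  then show "\<forall>i<n. f $ i = 0" by (simp add: fps_X_power_mult_nth)
next
  assume "\<forall>i<n. f $ i = 0"
  then have "f = fps_X ^ n * fps_shift n f"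
    by (intro fps_ext) (auto simp: fps_X_power_mult_nth)
  then show "fps_X ^ n dvd f" ..
qed

lemma fps_X_power_dvd_compose_X2:
  fixes f :: "'a::idom fps"
  assumes "fps_X ^ n dvd f"
  shows "fps_X ^ (2 * n) dvd (f oo fps_X ^ 2)"
proof -
  from assms obtain h where "f = fps_X ^ n * h" ..
  then have "f oo fps_X ^ 2 = (fps_X ^ n oo fps_X ^ 2) * (h oo fps_X ^ 2)"
    by (simp add: fps_compose_mult_distrib)
  also have "fps_X ^ n oo fps_X ^ 2 = (fps_X ^ (2 * n) :: 'a fps)"
    by (simp add: fps_X_power_compose power_mult)
  finally show ?thesis by simp
qed

lemma fps_compose_X2_nth: "(f oo fps_X ^ 2) $ n = (if even n then f $ (n div 2) else (0::'a::idom))"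
proof -
  have "(f oo fps_X ^ 2) $ n = (\<Sum>i=0..n. if even n \<and> i = n div 2 then f $ i else 0)"
    unfolding fps_compose_nth
  proof (rule sum.cong)
    fix i
    have "(fps_X ^ 2) ^ i = (fps_X ^ (2 * i) :: 'a fps)" by (simp add: power_mult)
    then show "f $ i * ((fps_X ^ 2) ^ i) $ n = (if even n \<and> i = n div 2 then f $ i else 0)"
      by auto
  qed simp
  then show ?thesis by (auto simp: sum.delta')
qed

lemma fps_X_power_dvd_inverse_diff:
  fixes f g :: "'a::field fps"
  assumes "fps_X ^ n dvd f - g" "f $ 0 \<noteq> 0" "g $ 0 \<noteq> 0"
  shows "fps_X ^ n dvd inverse f - inverse g"
proof -
  have "inverse f * inverse g * (g - f) = inverse f * (inverse g * g) - inverse g * (inverse f * f)"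
    by (simp add: algebra_simps)
  also have "\<dots> = inverse f - inverse g"
    using assms(2,3) by (simp add: inverse_mult_eq_1)
  finally have "inverse f - inverse g = inverse f * inverse g * (g - f)" ..
  moreover have "fps_X ^ n dvd g - f"
    using assms(1) by (metis dvd_minus_iff minus_diff_eq)
  ultimately show ?thesis by simp
qed

lemma cf_den_nth_0 [simp]: "cf_den c m N $ 0 = 1"
  by (cases N) auto

lemma cf_trunc_nth_0: "cf_trunc c N $ 0 = 1"
  by (simp add: cf_trunc_def)

lemma fps_X_power_dvd_cf_den_Suc: "fps_X ^ N dvd cf_den c m N - cf_den c m (Suc N)"
proof (induction N arbitrary: m)
  case 0
  then show ?case by simp
next
  case (Suc N)
  have "fps_X ^ N dvd inverse (cf_den c (Suc m) N) - inverse (cf_den c (Suc m) (Suc N))"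
    using Suc.IH by (intro fps_X_power_dvd_inverse_diff) simp_all
  then have "fps_X ^ Suc N dvd fps_const (of_int (c m)) * fps_X *
      (inverse (cf_den c (Suc m) N) - inverse (cf_den c (Suc m) (Suc N)))"
    by (simp add: mult.assoc mult.left_commute[of "fps_const _"])
  then show ?case by (simp add: algebra_simps)
qed

lemma fps_X_power_dvd_cf_trunc_diff:
  assumes "N \<le> M"
  shows "fps_X ^ N dvd cf_trunc c N - cf_trunc c M"
  using assms
proof (induction M rule: dec_induct)
  case base
  then show ?case by simp
next
  case (step M)
  have "fps_X ^ M dvd cf_trunc c M - cf_trunc c (Suc M)"
    unfolding cf_trunc_def
    by (intro fps_X_power_dvd_inverse_diff fps_X_power_dvd_cf_den_Suc) simp_all
  then have "fps_X ^ N dvd cf_trunc c M - cf_trunc c (Suc M)"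
    using step.hyps by (meson dvd_trans le_imp_power_dvd)
  with step.IH have "fps_X ^ N dvd (cf_trunc c N - cf_trunc c M) + (cf_trunc c M - cf_trunc c (Suc M))"
    by (rule dvd_add)
  then show ?case by simp
qed

text \<open>A pair (p, q) stands for the quotient p / q; a step is the Moebius map x \<mapsto> 1 / (1 + a w x).\<close>

definition cf_step :: "'a::comm_ring_1 \<Rightarrow> int \<Rightarrow> 'a \<times> 'a \<Rightarrow> 'a \<times> 'a" where
  "cf_step w a v = (snd v, of_int a * w * fst v + snd v)"

fun cf_steps :: "'a::comm_ring_1 \<Rightarrow> (nat \<Rightarrow> int) \<Rightarrow> nat \<Rightarrow> nat \<Rightarrow> 'a \<times> 'a \<Rightarrow> 'a \<times> 'a" where
  "cf_steps w c m 0 v = v"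
| "cf_steps w c m (Suc N) v = cf_step w (c m) (cf_steps w c (Suc m) N v)"

lemma cf_steps_add: "cf_steps w c m (N + M) v = cf_steps w c m N (cf_steps w c (m + N) M v)"
  by (induction N arbitrary: m) auto

lemma cf_steps_scale:
  "cf_steps w c m N (a * p, a * q) = (a * fst (cf_steps w c m N (p, q)), a * snd (cf_steps w c m N (p, q)))"
  by (induction N arbitrary: m) (auto simp: cf_step_def algebra_simps)

lemma cf_steps_compose_X2:
  fixes p q :: "'a::idom fps"
  shows "cf_steps (fps_X ^ 2) c m N (p oo fps_X ^ 2, q oo fps_X ^ 2) =
    (fst (cf_steps fps_X c m N (p, q)) oo fps_X ^ 2, snd (cf_steps fps_X c m N (p, q)) oo fps_X ^ 2)"
proof (induction N arbitrary: m)
  case 0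
  then show ?case by simp
next
  case (Suc N)
  have "of_int (c m) oo fps_X ^ 2 = (of_int (c m) :: 'a fps)"
    by (metis fps_const_compose fps_of_int)
  then show ?case
    by (simp add: Suc.IH cf_step_def fps_compose_add_distrib fps_compose_mult_distrib)
qed

lemma cf_steps_zero_one_compose_X2:
  "cf_steps (fps_X ^ 2) c m (Suc N) (0, 1 :: 'a::idom fps) =
    (fst (cf_steps fps_X c m N (1, 1)) oo fps_X ^ 2, snd (cf_steps fps_X c m N (1, 1)) oo fps_X ^ 2)"
proof -
  have "cf_steps (fps_X ^ 2) c m (Suc N) (0, 1 :: 'a fps) =
      cf_steps (fps_X ^ 2) c m N (1 oo fps_X ^ 2, 1 oo fps_X ^ 2)"
    using cf_steps_add[of "fps_X ^ 2" c m N 1 "(0, 1)"] by (simp add: cf_step_def)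
  also have "\<dots> = (fst (cf_steps fps_X c m N (1, 1)) oo fps_X ^ 2, snd (cf_steps fps_X c m N (1, 1)) oo fps_X ^ 2)"
    by (rule cf_steps_compose_X2)
  finally show ?thesis .
qed

lemma cf_steps_one_one:
  "\<exists>q. q $ 0 = 1 \<and> cf_steps fps_X c m N (1, 1) = (inverse (cf_den c m N) * q, q)"
proof (induction N arbitrary: m)
  case 0
  then show ?case by simp
next
  case (Suc N)
  obtain q where q0: "q $ 0 = 1"
    and q: "cf_steps fps_X c (Suc m) N (1, 1) = (inverse (cf_den c (Suc m) N) * q, q)"
    using Suc.IH by blast
  define D where "D = cf_den c m (Suc N)"
  have "of_int (c m) * fps_X * (inverse (cf_den c (Suc m) N) * q) + q = D * q"
    by (simp add: D_def fps_of_int algebra_simps)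
  then have "cf_steps fps_X c m (Suc N) (1, 1) = (q, D * q)"
    by (simp add: q cf_step_def)
  moreover have "q = inverse D * (D * q)"
    by (simp add: D_def mult.assoc[symmetric] inverse_mult_eq_1)
  ultimately show ?case
    using q0 by (auto simp: D_def)
qed

lemma grs_0 [simp]: "grs 0 = 1"
  by (simp add: grs.simps)

lemma grs_double [simp]: "grs (2 * n) = grs n"
  by (cases "n = 0") (simp_all add: grs.simps[of "2 * n"])

lemma grs_double_Suc [simp]: "grs (Suc (2 * n)) = (-1) ^ n * grs n"
  by (simp add: grs.simps[of "Suc (2 * n)"])

lemma grs_cases: "grs n = 1 \<or> grs n = -1"
proof (induction n rule: nat_bit_induct)
  case zero
  then show ?case by simp
next
  case (even n)
  then show ?case by simp
next
  case (odd n)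
  then show ?case by (auto simp: minus_one_power_iff)
qed

lemma grs_mult_self [simp]: "grs n * grs n = 1"
  using grs_cases[of n] by auto

lemma grs_c_double: "grs_c (2 * m) = grs m * grs (m + 1)"
  using grs_double[of "m + 1"] by (simp add: grs_c_def)

lemma grs_c_double_Suc: "grs_c (Suc (2 * m)) = - (grs m * grs (m + 1))"
proof -
  have "Suc (2 * m) + 2 = Suc (2 * (m + 1))" by simp
  then show ?thesis
    by (simp only: grs_c_def grs_double_Suc) (simp add: algebra_simps)
qed

lemma grs_c_quadruple:
  "grs_c (4 * m) = (-1) ^ m"
  "grs_c (4 * m + 1) = - ((-1) ^ m)"
  "grs_c (4 * m + 2) = (-1) ^ m * (grs m * grs (m + 1))"
  "grs_c (4 * m + 3) = - ((-1) ^ m * (grs m * grs (m + 1)))"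
  using grs_c_double[of "2 * m"] grs_c_double_Suc[of "2 * m"]
    grs_c_double[of "2 * m + 1"] grs_c_double_Suc[of "2 * m + 1"] grs_double[of "Suc m"]
  by (simp_all add: numeral_3_eq_3)

text \<open>
  On quotients this is x \<mapsto> (-1)^j (1 - x) / w. It conjugates a block of four steps with
  parameter w into two steps with parameter w^2.
\<close>

definition cf_contract :: "'a::comm_ring_1 \<Rightarrow> nat \<Rightarrow> 'a \<times> 'a \<Rightarrow> 'a \<times> 'a" where
  "cf_contract w j v = ((-1) ^ j * (snd v - fst v), w * snd v)"

lemma cf_contract_block:
  fixes w :: "'a::comm_ring_1" and e :: int and m :: nat
  assumes "e = 1 \<or> e = -1"
  defines "s \<equiv> (-1) ^ m :: int"
  shows "cf_contract w m (cf_step w s (cf_step w (- s) (cf_step w (s * e) (cf_step w (- (s * e)) v)))) =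
    cf_step (w ^ 2) e (cf_step (w ^ 2) (- e) (cf_contract w (Suc m) v))"
  using assms(1) unfolding s_def
  by (cases "even m"; elim disjE)
    (auto simp: cf_contract_def cf_step_def algebra_simps power2_eq_square)

lemma cf_contract_cf_steps_grs:
  fixes w :: "'a::comm_ring_1"
  shows "cf_contract w m (cf_steps w grs_c (4 * m) (4 * K) v) =
    cf_steps (w ^ 2) grs_c (2 * m) (2 * K) (cf_contract w (m + K) v)"
proof (induction K arbitrary: m)
  case 0
  then show ?case by simp
next
  case (Suc K)
  have e: "grs m * grs (m + 1) = 1 \<or> grs m * grs (m + 1) = -1"
    using grs_cases[of m] grs_cases[of "m + 1"] by auto
  have "cf_contract w m (cf_steps w grs_c (4 * m) (4 * Suc K) v) =
      cf_contract w m (cf_steps w grs_c (4 * m) 4 (cf_steps w grs_c (4 * Suc m) (4 * K) v))"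
    using cf_steps_add[of w grs_c "4 * m" 4 "4 * K" v] by (simp add: ac_simps)
  also have "\<dots> = cf_steps (w ^ 2) grs_c (2 * m) 2
      (cf_contract w (Suc m) (cf_steps w grs_c (4 * Suc m) (4 * K) v))"
    using cf_contract_block[OF e, of w m] grs_c_quadruple[of m] grs_c_double[of m] grs_c_double_Suc[of m]
    by (simp add: numeral_eq_Suc algebra_simps)
  also have "\<dots> = cf_steps (w ^ 2) grs_c (2 * m) 2
      (cf_steps (w ^ 2) grs_c (2 * Suc m) (2 * K) (cf_contract w (Suc m + K) v))"
    by (simp only: Suc.IH)
  also have "\<dots> = cf_steps (w ^ 2) grs_c (2 * m) (2 * Suc K) (cf_contract w (m + Suc K) v)"
    using cf_steps_add[of "w ^ 2" grs_c "2 * m" 2 "2 * K"] by (simp add: ac_simps)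
  finally show ?case .
qed

lemma cf_trunc_grs_quadruple:
  "cf_trunc grs_c (4 * Suc K) = 1 - fps_X * (cf_trunc grs_c (2 * K + 1) oo fps_X ^ 2)"
proof -
  let ?T = "cf_trunc grs_c (4 * Suc K)" and ?t = "cf_trunc grs_c (2 * K + 1)"
  obtain Q where Q0: "Q $ 0 = 1" and Q: "cf_steps fps_X grs_c 0 (4 * Suc K) (1, 1) = (?T * Q, Q)"
    using cf_steps_one_one unfolding cf_trunc_def by blast
  obtain q where q: "cf_steps fps_X grs_c 0 (2 * K + 1) (1, 1) = (?t * q, q)"
    using cf_steps_one_one unfolding cf_trunc_def by blast
  have tail: "cf_steps (fps_X ^ 2) grs_c 0 (Suc (2 * K + 1)) (0, 1) =
      ((?t oo fps_X ^ 2) * (q oo fps_X ^ 2), q oo fps_X ^ 2)"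
    unfolding cf_steps_zero_one_compose_X2 q prod.sel by (simp add: fps_compose_mult_distrib)
  have blocks: "2 * Suc K = Suc (2 * K + 1)"
    by simp
  have start: "cf_contract fps_X (0 + Suc K) (1, 1) = (fps_X * 0, fps_X * 1)"
    by (simp add: cf_contract_def)
  have "cf_contract fps_X 0 (?T * Q, Q) =
      cf_contract fps_X 0 (cf_steps fps_X grs_c (4 * 0) (4 * Suc K) (1, 1))"
    by (simp only: Q mult_0_right)
  also have "\<dots> = cf_steps (fps_X ^ 2) grs_c (2 * 0) (2 * Suc K) (cf_contract fps_X (0 + Suc K) (1, 1))"
    by (rule cf_contract_cf_steps_grs)
  also have "\<dots> = (fps_X * ((?t oo fps_X ^ 2) * (q oo fps_X ^ 2)), fps_X * (q oo fps_X ^ 2))"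
    by (simp only: start mult_0_right blocks cf_steps_scale tail prod.sel)
  finally have contract: "cf_contract fps_X 0 (?T * Q, Q) =
      (fps_X * ((?t oo fps_X ^ 2) * (q oo fps_X ^ 2)), fps_X * (q oo fps_X ^ 2))" .
  then have "Q = q oo fps_X ^ 2"
    by (simp add: cf_contract_def)
  with contract have "Q - ?T * Q = fps_X * (?t oo fps_X ^ 2) * Q"
    by (simp add: cf_contract_def mult.assoc)
  then have "(1 - ?T) * Q = fps_X * (?t oo fps_X ^ 2) * Q"
    by (simp add: left_diff_distrib)
  moreover have "Q \<noteq> 0"
    using Q0 by auto
  ultimately have "1 - ?T = fps_X * (?t oo fps_X ^ 2)"
    by simp
  then show ?thesis
    by (simp add: algebra_simps)
qed

lemma lhs_series_nth: "lhs_series $ n = (\<Sum>k | 2 ^ k - 1 = n. (-1) ^ k)"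
proof -
  have "lhs_series $ n = (\<Sum>k\<le>n. if 2 ^ k - 1 = n then (-1) ^ k else 0)"
    by (simp add: lhs_series_def)
  also have "\<dots> = (\<Sum>k \<in> {k \<in> {..n}. 2 ^ k - 1 = n}. (-1) ^ k)"
    by (rule sum.inter_filter[symmetric]) simp
  also have "{k \<in> {..n}. 2 ^ k - 1 = n} = {k. 2 ^ k - 1 = n}"
    using less_exp by (auto simp: less_Suc_eq_le[symmetric])
  finally show ?thesis .
qed

lemma lhs_series_nth_0: "lhs_series $ 0 = 1"
  by (simp add: lhs_series_def)

lemma lhs_series_nth_Suc: "lhs_series $ Suc n = (if even n then - lhs_series $ (n div 2) else 0)"
proof -
  have shift: "2 * 2 ^ j - 1 = Suc n \<longleftrightarrow> even n \<and> 2 ^ j - 1 = n div 2" for j :: nat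
  proof -
    have "(1::nat) \<le> 2 ^ j" by simp
    then show ?thesis by presburger
  qed
  have "{k. 2 ^ k - 1 = Suc n} = Suc ` {j. even n \<and> 2 ^ j - 1 = n div 2}"
  proof (intro set_eqI iffI)
    fix k assume k: "k \<in> {k. 2 ^ k - 1 = Suc n}"
    then obtain j where "k = Suc j" by (cases k) auto
    with k show "k \<in> Suc ` {j. even n \<and> 2 ^ j - 1 = n div 2}"
      using shift[of j] by auto
  qed (use shift in auto)
  then have "lhs_series $ Suc n = (\<Sum>j | even n \<and> 2 ^ j - 1 = n div 2. (-1) ^ Suc j)"
    by (simp add: lhs_series_nth sum.reindex)
  then show ?thesis
    by (cases "even n") (simp_all add: lhs_series_nth sum_negf)
qed

lemma lhs_series_functional_equation:
  "fps_int_to_rat lhs_series = 1 - fps_X * (fps_int_to_rat lhs_series oo fps_X ^ 2)"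
proof (rule fps_ext)
  fix n
  show "fps_int_to_rat lhs_series $ n = (1 - fps_X * (fps_int_to_rat lhs_series oo fps_X ^ 2)) $ n"
    by (cases n) (simp_all add: fps_int_to_rat_def lhs_series_nth_0 lhs_series_nth_Suc fps_compose_X2_nth)
qed

lemma fps_X_power_dvd_lhs_series_minus_cf_trunc:
  "fps_X ^ N dvd fps_int_to_rat lhs_series - cf_trunc grs_c N"
proof (induction N rule: less_induct)
  case (less N)
  define F where "F = fps_int_to_rat lhs_series"
  show ?case
  proof (cases "N \<le> 1")
    case True
    have "fps_X ^ 1 dvd F - cf_trunc grs_c N"
      unfolding fps_X_power_dvd_iff by (simp add: F_def fps_int_to_rat_def lhs_series_nth_0 cf_trunc_nth_0)
    with True show ?thesis
      unfolding F_def by (meson dvd_trans le_imp_power_dvd)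
  next
    case False
    define K where "K = N div 4"
    have small: "2 * K + 1 < N" and large: "N \<le> 4 * Suc K" "N \<le> Suc (2 * (2 * K + 1))"
      using False unfolding K_def by presburger+
    have "F - cf_trunc grs_c (4 * Suc K) =
        (1 - fps_X * (F oo fps_X ^ 2)) - (1 - fps_X * (cf_trunc grs_c (2 * K + 1) oo fps_X ^ 2))"
      unfolding F_def by (subst (1) lhs_series_functional_equation, subst cf_trunc_grs_quadruple) (rule refl)
    also have "\<dots> = - (fps_X * ((F - cf_trunc grs_c (2 * K + 1)) oo fps_X ^ 2))"
      by (simp add: fps_compose_sub_distrib algebra_simps)
    moreover have "fps_X ^ Suc (2 * (2 * K + 1)) dvd fps_X * ((F - cf_trunc grs_c (2 * K + 1)) oo fps_X ^ 2)"
      unfolding power_Suc using less.IH[OF small]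
      by (intro mult_dvd_mono fps_X_power_dvd_compose_X2) (simp_all add: F_def)
    ultimately have "fps_X ^ Suc (2 * (2 * K + 1)) dvd F - cf_trunc grs_c (4 * Suc K)"
      by simp
    then have "fps_X ^ N dvd F - cf_trunc grs_c (4 * Suc K)"
      by (rule dvd_trans[OF le_imp_power_dvd[OF large(2)]])
    moreover have "fps_X ^ N dvd cf_trunc grs_c N - cf_trunc grs_c (4 * Suc K)"
      using large(1) by (rule fps_X_power_dvd_cf_trunc_diff)
    ultimately have "fps_X ^ N dvd (F - cf_trunc grs_c (4 * Suc K)) - (cf_trunc grs_c N - cf_trunc grs_c (4 * Suc K))"
      by (rule dvd_diff)
    then show ?thesis
      by (simp add: F_def)
  qed
qed

theorem corollary5p12:
  shows "(\<lambda>N. cf_trunc grs_c N) \<longlonglongrightarrow> fps_int_to_rat lhs_series"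
proof (rule tendsto_fpsI)
  fix n
  have "cf_trunc grs_c N $ n = fps_int_to_rat lhs_series $ n" if "N > n" for N
    using fps_X_power_dvd_lhs_series_minus_cf_trunc[of N] that by (simp add: fps_X_power_dvd_iff)
  then show "eventually (\<lambda>N. cf_trunc grs_c N $ n = fps_int_to_rat lhs_series $ n) sequentially"
    by (auto simp: eventually_sequentially intro: exI[of _ "Suc n"])
qed

end
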